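(* For every positive integer $n$, there exists a finite semigroup $S$ with a principal right ideal $A$ such that $\mathrm{H}_{\mathcal{R}}(S)=n$ and $\mathrm{H}_{\mathcal{R}}(A)=2n-1$.
   Context: For a semigroup $S$, $S^1$ denotes $S$ with an identity adjoined if necessary; a principal right ideal is a set of the form $aS^1$ with $a\in S$. Green's preorder on a semigroup $M$: $u\leq_{\mathcal{R}} v$ iff $uM^1\subseteq vM^1$; $\mathcal{R}$ is the associated equivalence; the $\mathcal{R}$-height $\mathrm{H}_{\mathcal{R}}(M)$ is the supremum of the cardinalities of chains in the poset of $\mathcal{R}$-classes. $\mathrm{H}_{\mathcal{R}}(A)$ is computed in $A$ as a semigroup. *)

theory Defs
  imports Main "HOL-Library.Extended_Nat"
begin

definition semigroup_on :: "'a set \<Rightarrow> ('a \<Rightarrow> 'a \<Rightarrow> 'a) \<Rightarrow> bool" where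
  "semigroup_on S f \<longleftrightarrow> (\<forall>x\<in>S. \<forall>y\<in>S. f x y \<in> S)
     \<and> (\<forall>x\<in>S. \<forall>y\<in>S. \<forall>z\<in>S. f (f x y) z = f x (f y z))"

definition right_ideal_gen :: "'a set \<Rightarrow> ('a \<Rightarrow> 'a \<Rightarrow> 'a) \<Rightarrow> 'a \<Rightarrow> 'a set" where
  "right_ideal_gen S f a = insert a {f a m | m. m \<in> S}"

definition R_le :: "'a set \<Rightarrow> ('a \<Rightarrow> 'a \<Rightarrow> 'a) \<Rightarrow> 'a \<Rightarrow> 'a \<Rightarrow> bool" where
  "R_le S f u v \<longleftrightarrow> right_ideal_gen S f u \<subseteq> right_ideal_gen S f v"

definition R_class :: "'a set \<Rightarrow> ('a \<Rightarrow> 'a \<Rightarrow> 'a) \<Rightarrow> 'a \<Rightarrow> 'a set" where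
  "R_class S f x = {y \<in> S. R_le S f y x \<and> R_le S f x y}"

definition R_classes :: "'a set \<Rightarrow> ('a \<Rightarrow> 'a \<Rightarrow> 'a) \<Rightarrow> 'a set set" where
  "R_classes S f = R_class S f ` S"

definition R_class_le :: "'a set \<Rightarrow> ('a \<Rightarrow> 'a \<Rightarrow> 'a) \<Rightarrow> 'a set \<Rightarrow> 'a set \<Rightarrow> bool" where
  "R_class_le S f C D \<longleftrightarrow> (\<exists>x\<in>C. \<exists>y\<in>D. R_le S f x y)"

definition R_chain :: "'a set \<Rightarrow> ('a \<Rightarrow> 'a \<Rightarrow> 'a) \<Rightarrow> 'a set set \<Rightarrow> bool" where
  "R_chain S f Ch \<longleftrightarrow> Ch \<subseteq> R_classes S f \<and>
     (\<forall>C\<in>Ch. \<forall>D\<in>Ch. R_class_le S f C D \<or> R_class_le S f D C)"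

definition R_height :: "'a set \<Rightarrow> ('a \<Rightarrow> 'a \<Rightarrow> 'a) \<Rightarrow> enat" where
  "R_height S f = Sup {enat (card Ch) | Ch. R_chain S f Ch \<and> finite Ch}"

end

(* S_n consists of the self-maps of the chain 0 < 1 < ... < n that clamp onto an interval [l, h]
   of length less than n and then translate it; the product x y = y o x makes x S_n^1 the set of
   maps that factor through x.  The width f n - f 0 of the range cannot grow under right
   multiplication, and two maps of the same width, one a right multiple of the other, differ by a
   translation, so each is a right multiple of the other.  Hence the width is a rank function for
   the R-order, and widths 0, ..., n - 1 occur along a chain: the R-height of S_n is n.
   In the right ideal generated by the capped successor a q = min (q + 1) n every right multiple
   passes through a, which shortens any range that ends at n.  Each positive width therefore splits
   into two R-classes, according to whether the range ends at n, and the ideal has R-height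
   1 + 2 (n - 1) = 2 n - 1.  Finally the finite semigroup is copied into nat along an injection. *)

theory Submission
  imports Defs
begin

section \<open>Counting \<open>\<R>\<close>-classes with a rank function\<close>

lemma R_le_refl [simp]: "R_le S f x x"
  by (simp add: R_le_def)

lemma R_le_trans: "R_le S f x y \<Longrightarrow> R_le S f y z \<Longrightarrow> R_le S f x z"
  by (auto simp: R_le_def)

lemma right_ideal_gen_subset: "semigroup_on S f \<Longrightarrow> x \<in> S \<Longrightarrow> right_ideal_gen S f x \<subseteq> S"
  by (auto simp: right_ideal_gen_def semigroup_on_def)

lemma semigroup_on_right_ideal_gen:
  assumes "semigroup_on S f" "a \<in> S"
  shows "semigroup_on (right_ideal_gen S f a) f"
proof -
  have "f x y \<in> right_ideal_gen S f a" if "x \<in> right_ideal_gen S f a" "y \<in> S" for x y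
    using that assms unfolding right_ideal_gen_def semigroup_on_def by auto
  then show ?thesis
    using right_ideal_gen_subset[OF assms] assms(1) unfolding semigroup_on_def by blast
qed

lemma R_le_iff:
  assumes "semigroup_on S f" and "v \<in> S"
  shows "R_le S f u v \<longleftrightarrow> u = v \<or> (\<exists>m\<in>S. u = f v m)"
proof
  assume "R_le S f u v"
  then show "u = v \<or> (\<exists>m\<in>S. u = f v m)"
    by (auto simp: R_le_def right_ideal_gen_def)
next
  assume "u = v \<or> (\<exists>m\<in>S. u = f v m)"
  then show "R_le S f u v"
  proof
    assume "\<exists>m\<in>S. u = f v m"
    then obtain m where "m \<in> S" "u = f v m" by blast
    then have "f u m' = f v (f m m') \<and> f m m' \<in> S" if "m' \<in> S" for m'
      using assms that unfolding semigroup_on_def by blast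
    then show "R_le S f u v"
      using \<open>m \<in> S\<close> \<open>u = f v m\<close> unfolding R_le_def right_ideal_gen_def by blast
  qed simp
qed

lemma R_class_self: "x \<in> S \<Longrightarrow> x \<in> R_class S f x"
  by (simp add: R_class_def)

lemma R_class_eqI: "R_le S f x y \<Longrightarrow> R_le S f y x \<Longrightarrow> R_class S f x = R_class S f y"
  by (auto simp: R_class_def intro: R_le_trans)

lemma R_class_mem_eq: "y \<in> R_class S f x \<Longrightarrow> R_class S f y = R_class S f x"
  by (auto simp: R_class_def intro: R_le_trans)

lemma rank_R_class_eq:
  assumes mono: "\<And>x y. x \<in> S \<Longrightarrow> y \<in> S \<Longrightarrow> R_le S f x y \<Longrightarrow> \<mu> x \<le> (\<mu> y :: 'b::order)"
    and "y \<in> R_class S f x" "x \<in> S"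
  shows "\<mu> y = \<mu> x"
  using assms by (force simp: R_class_def intro: antisym)

lemma card_R_chain_le_rank:
  fixes \<mu> :: "'a \<Rightarrow> 'b::order"
  assumes "finite V" and "\<mu> ` S \<subseteq> V"
    and mono: "\<And>x y. x \<in> S \<Longrightarrow> y \<in> S \<Longrightarrow> R_le S f x y \<Longrightarrow> \<mu> x \<le> \<mu> y"
    and strict: "\<And>x y. x \<in> S \<Longrightarrow> y \<in> S \<Longrightarrow> R_le S f x y \<Longrightarrow> \<mu> x = \<mu> y \<Longrightarrow> R_le S f y x"
    and "R_chain S f Ch"
  shows "card Ch \<le> card V"
proof (rule card_le_if_inj_on_rel[where r = "\<lambda>C i. \<exists>x\<in>C. \<mu> x = i"])
  have classes: "Ch \<subseteq> R_class S f ` S"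
    and comparable: "\<And>C D. C \<in> Ch \<Longrightarrow> D \<in> Ch \<Longrightarrow> R_class_le S f C D \<or> R_class_le S f D C"
    using \<open>R_chain S f Ch\<close> unfolding R_chain_def R_classes_def by blast+
  show "finite V" by fact
  show "\<exists>i. i \<in> V \<and> (\<exists>x\<in>C. \<mu> x = i)" if "C \<in> Ch" for C
  proof -
    obtain x where "x \<in> S" "C = R_class S f x"
      using \<open>C \<in> Ch\<close> classes by blast
    moreover have "\<mu> x \<in> V"
      using \<open>x \<in> S\<close> \<open>\<mu> ` S \<subseteq> V\<close> by blast
    ultimately show ?thesis
      using R_class_self by metis
  qed
  show "C = D" if CD: "C \<in> Ch" "D \<in> Ch" and "\<exists>x\<in>C. \<mu> x = i" "\<exists>y\<in>D. \<mu> y = i" for C D i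
  proof -
    obtain x0 y0 where x0: "x0 \<in> S" "C = R_class S f x0" and y0: "y0 \<in> S" "D = R_class S f y0"
      using CD classes by blast
    obtain x y where xy: "x \<in> C" "y \<in> D" "R_le S f x y \<or> R_le S f y x"
      using comparable[OF CD] unfolding R_class_le_def by blast
    have "\<mu> x = \<mu> y"
      using that(3,4) rank_R_class_eq[of S f \<mu>, OF mono] x0 y0 xy by metis
    moreover have "x \<in> S" "y \<in> S"
      using xy x0 y0 by (auto simp: R_class_def)
    ultimately have "R_le S f x y" "R_le S f y x"
      using xy(3) strict by metis+
    then show "C = D"
      using xy(1,2) x0(2) y0(2) by (metis R_class_eqI R_class_mem_eq)
  qed
qed

lemma R_chain_of_rank_section:
  assumes mono: "\<And>x y. x \<in> S \<Longrightarrow> y \<in> S \<Longrightarrow> R_le S f x y \<Longrightarrow> \<mu> x \<le> (\<mu> y :: 'b::linorder)"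
    and chain_mem: "\<And>i. i \<in> V \<Longrightarrow> e i \<in> S \<and> \<mu> (e i) = i"
    and chain_le: "\<And>i j. i \<in> V \<Longrightarrow> j \<in> V \<Longrightarrow> i \<le> j \<Longrightarrow> R_le S f (e i) (e j)"
  shows "R_chain S f (R_class S f ` e ` V)" and "card (R_class S f ` e ` V) = card V"
proof -
  show "R_chain S f (R_class S f ` e ` V)"
    unfolding R_chain_def R_classes_def
  proof (intro conjI ballI)
    show "R_class S f ` e ` V \<subseteq> R_class S f ` S"
      using chain_mem by blast
    fix C D assume "C \<in> R_class S f ` e ` V" "D \<in> R_class S f ` e ` V"
    then obtain i j where ij: "i \<in> V" "j \<in> V" "C = R_class S f (e i)" "D = R_class S f (e j)"
      by blast
    then have "e i \<in> C" "e j \<in> D"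
      using chain_mem R_class_self by metis+
    then show "R_class_le S f C D \<or> R_class_le S f D C"
      unfolding R_class_le_def using chain_le ij(1,2) le_cases by metis
  qed
  have "inj_on (R_class S f) (e ` V)"
  proof (rule inj_onI)
    fix x y assume "x \<in> e ` V" "y \<in> e ` V" and same: "R_class S f x = R_class S f y"
    then obtain i j where ij: "i \<in> V" "j \<in> V" "x = e i" "y = e j"
      by blast
    then have "y \<in> R_class S f x"
      using same chain_mem R_class_self by metis
    then have "\<mu> y = \<mu> x"
      using rank_R_class_eq[of S f \<mu>, OF mono] ij chain_mem by blast
    then show "x = y"
      using ij chain_mem by metis
  qed
  then show "card (R_class S f ` e ` V) = card V"
    using chain_mem by (metis card_image inj_onI)
qed

lemma R_height_eq_card_rank:
  fixes \<mu> :: "'a \<Rightarrow> 'b::linorder"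
  assumes "finite V" and "\<mu> ` S \<subseteq> V"
    and mono: "\<And>x y. x \<in> S \<Longrightarrow> y \<in> S \<Longrightarrow> R_le S f x y \<Longrightarrow> \<mu> x \<le> \<mu> y"
    and strict: "\<And>x y. x \<in> S \<Longrightarrow> y \<in> S \<Longrightarrow> R_le S f x y \<Longrightarrow> \<mu> x = \<mu> y \<Longrightarrow> R_le S f y x"
    and chain_mem: "\<And>i. i \<in> V \<Longrightarrow> e i \<in> S \<and> \<mu> (e i) = i"
    and chain_le: "\<And>i j. i \<in> V \<Longrightarrow> j \<in> V \<Longrightarrow> i \<le> j \<Longrightarrow> R_le S f (e i) (e j)"
  shows "R_height S f = enat (card V)"
proof -
  have "card Ch \<le> card V" if "R_chain S f Ch" for Ch
    using card_R_chain_le_rank[OF assms(1-4) that] .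
  moreover have "R_chain S f (R_class S f ` e ` V)" "card (R_class S f ` e ` V) = card V"
    using R_chain_of_rank_section[OF mono chain_mem chain_le] by blast+
  moreover have "finite (R_class S f ` e ` V)"
    using \<open>finite V\<close> by simp
  ultimately show ?thesis
    unfolding R_height_def by (intro antisym Sup_least Sup_upper) (auto, metis)
qed

section \<open>Transport along an injection\<close>

lemma R_classes_image:
  assumes "\<And>x y. x \<in> S \<Longrightarrow> y \<in> S \<Longrightarrow> R_le (g ` S) f' (g x) (g y) \<longleftrightarrow> R_le S f x y"
  shows "R_classes (g ` S) f' = image g ` R_classes S f"
proof -
  have "R_class (g ` S) f' (g x) = g ` R_class S f x" if "x \<in> S" for x
    using that assms by (auto simp: R_class_def)
  then show ?thesis
    unfolding R_classes_def by (auto simp: image_image)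
qed

lemma R_chain_image_iff:
  assumes R_le_g: "\<And>x y. x \<in> S \<Longrightarrow> y \<in> S \<Longrightarrow> R_le (g ` S) f' (g x) (g y) \<longleftrightarrow> R_le S f x y"
    and Ch: "Ch \<subseteq> R_classes S f"
  shows "R_chain (g ` S) f' (image g ` Ch) \<longleftrightarrow> R_chain S f Ch"
proof -
  have "C \<subseteq> S" if "C \<in> Ch" for C
    using that Ch by (auto simp: R_classes_def R_class_def)
  then have "R_class_le (g ` S) f' (g ` C) (g ` D) \<longleftrightarrow> R_class_le S f C D" if "C \<in> Ch" "D \<in> Ch" for C D
    using that unfolding R_class_le_def by (auto simp: R_le_g subset_iff)
  then show ?thesis
    using Ch unfolding R_chain_def by (auto simp: R_classes_image[OF R_le_g])
qed

lemma R_height_transfer: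
  assumes g: "inj_on g S"
    and R_le_g: "\<And>x y. x \<in> S \<Longrightarrow> y \<in> S \<Longrightarrow> R_le (g ` S) f' (g x) (g y) \<longleftrightarrow> R_le S f x y"
  shows "R_height (g ` S) f' = R_height S f"
proof -
  have inj_G: "inj_on (image g) (R_classes S f)"
    using inj_on_image_Pow[OF g] by (rule inj_on_subset) (auto simp: R_classes_def R_class_def)
  have card_G: "card (image g ` Ch) = card Ch" "finite (image g ` Ch) \<longleftrightarrow> finite Ch"
    if "Ch \<subseteq> R_classes S f" for Ch
    using inj_on_subset[OF inj_G that] by (simp_all add: card_image finite_image_iff)
  have "{enat (card Ch') | Ch'. R_chain (g ` S) f' Ch' \<and> finite Ch'}
      = {enat (card Ch) | Ch. R_chain S f Ch \<and> finite Ch}" (is "?L = ?R")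
  proof
    show "?L \<subseteq> ?R"
    proof
      fix k assume "k \<in> ?L"
      then obtain Ch' where "R_chain (g ` S) f' Ch'" "finite Ch'" "k = enat (card Ch')"
        by blast
      moreover obtain Ch where Ch: "Ch \<subseteq> R_classes S f" "Ch' = image g ` Ch"
        using \<open>R_chain (g ` S) f' Ch'\<close> R_classes_image[OF R_le_g]
        by (auto simp: R_chain_def subset_image_iff)
      ultimately have "R_chain S f Ch" "finite Ch" "k = enat (card Ch)"
        using R_chain_image_iff[OF R_le_g Ch(1)] card_G[OF Ch(1)] by simp_all
      then show "k \<in> ?R"
        by blast
    qed
    show "?R \<subseteq> ?L"
    proof
      fix k assume "k \<in> ?R"
      then obtain Ch where "R_chain S f Ch" "finite Ch" "k = enat (card Ch)"
        by blast
      moreover have Ch: "Ch \<subseteq> R_classes S f"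
        using \<open>R_chain S f Ch\<close> by (simp add: R_chain_def)
      ultimately have "R_chain (g ` S) f' (image g ` Ch)" "finite (image g ` Ch)"
          "k = enat (card (image g ` Ch))"
        using R_chain_image_iff[OF R_le_g Ch] card_G[OF Ch] by simp_all
      then show "k \<in> ?L"
        by blast
    qed
  qed
  then show ?thesis
    unfolding R_height_def by simp
qed

definition transfer_op :: "('a \<Rightarrow> 'b) \<Rightarrow> 'a set \<Rightarrow> ('a \<Rightarrow> 'a \<Rightarrow> 'a) \<Rightarrow> 'b \<Rightarrow> 'b \<Rightarrow> 'b" where
  "transfer_op g S f x y = g (f (inv_into S g x) (inv_into S g y))"

lemma transfer_op_image:
  "inj_on g S \<Longrightarrow> x \<in> S \<Longrightarrow> y \<in> S \<Longrightarrow> transfer_op g S f (g x) (g y) = g (f x y)"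
  by (simp add: transfer_op_def)

lemma semigroup_on_transfer_op:
  "inj_on g S \<Longrightarrow> semigroup_on S f \<Longrightarrow> semigroup_on (g ` S) (transfer_op g S f)"
  unfolding semigroup_on_def by (auto simp: transfer_op_image)

lemma right_ideal_gen_transfer_op:
  assumes "inj_on g S" "U \<subseteq> S" "x \<in> U"
  shows "right_ideal_gen (g ` U) (transfer_op g S f) (g x) = g ` right_ideal_gen U f x"
proof -
  have "transfer_op g S f (g x) (g m) = g (f x m)" if "m \<in> U" for m
    using assms that by (simp add: transfer_op_image subsetD)
  then show ?thesis
    unfolding right_ideal_gen_def setcompr_eq_image by (simp add: image_image cong: image_cong)
qed

lemma R_le_transfer_op:
  assumes g: "inj_on g S" and U: "U \<subseteq> S" "semigroup_on U f" and "x \<in> U" "y \<in> U"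
  shows "R_le (g ` U) (transfer_op g S f) (g x) (g y) \<longleftrightarrow> R_le U f x y"
proof -
  have image_le_iff: "g ` A \<subseteq> g ` B \<longleftrightarrow> A \<subseteq> B" if "A \<subseteq> S" "B \<subseteq> S" for A B
  proof
    show "A \<subseteq> B" if "g ` A \<subseteq> g ` B"
      using that \<open>A \<subseteq> S\<close> \<open>B \<subseteq> S\<close> inj_on_image_mem_iff[OF g] by blast
  qed (rule image_mono)
  have "right_ideal_gen U f z \<subseteq> S" if "z \<in> U" for z
    using right_ideal_gen_subset[OF U(2) that] U(1) by blast
  then show ?thesis
    using assms unfolding R_le_def
    by (simp add: right_ideal_gen_transfer_op image_le_iff)
qed

lemma R_height_transfer_op:
  assumes "inj_on g S" "U \<subseteq> S" "semigroup_on U f"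
  shows "R_height (g ` U) (transfer_op g S f) = R_height U f"
  using assms by (intro R_height_transfer) (auto intro: inj_on_subset simp: R_le_transfer_op)

lemma finite_semigroup_nat_copy:
  assumes "finite S" "semigroup_on S f" "a \<in> S"
  shows "\<exists>(S' :: nat set) f' a'. finite S' \<and> semigroup_on S' f' \<and> a' \<in> S' \<and>
           R_height S' f' = R_height S f \<and>
           R_height (right_ideal_gen S' f' a') f' = R_height (right_ideal_gen S f a) f"
proof -
  obtain g :: "'a \<Rightarrow> nat" where g: "inj_on g S"
    using finite_imp_inj_to_nat_seg[OF \<open>finite S\<close>] by blast
  have "right_ideal_gen (g ` S) (transfer_op g S f) (g a) = g ` right_ideal_gen S f a"
    using g \<open>a \<in> S\<close> by (simp add: right_ideal_gen_transfer_op)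
  moreover have "semigroup_on (right_ideal_gen S f a) f"
    using assms(2,3) by (rule semigroup_on_right_ideal_gen)
  ultimately show ?thesis
    using assms g right_ideal_gen_subset[OF assms(2,3)]
    by (intro exI[of _ "g ` S"] exI[of _ "transfer_op g S f"] exI[of _ "g a"])
      (simp add: semigroup_on_transfer_op R_height_transfer_op)
qed

section \<open>Clamp-and-shift maps of a finite chain\<close>

definition clamp_shift :: "nat \<Rightarrow> nat \<Rightarrow> nat \<Rightarrow> nat \<Rightarrow> nat" where
  "clamp_shift l h c q = min (max q l) h - l + c"

lemma clamp_clamp:
  "l \<le> L \<Longrightarrow> L \<le> H \<Longrightarrow> H \<le> h \<Longrightarrow> min (max (min (max q l) h) L) H = min (max q L) (H::nat)"
  by (auto simp: min_def max_def)

lemma clamp_narrow: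
  "c \<le> y \<Longrightarrow> y \<le> e \<Longrightarrow> l \<le> h \<Longrightarrow> l \<le> e \<Longrightarrow>
    min (max y l) h = min (max y (max c l)) (min e (h::nat))"
  by (auto simp: min_def max_def)

lemma clamp_translate:
  "c \<le> L \<Longrightarrow> L \<le> H \<Longrightarrow> l \<le> t \<Longrightarrow>
    min (max (t - l + c) L) H = min (max t (L - c + l)) (H - c + l) - l + (c::nat)"
  by (auto simp: min_def max_def)

lemma clamp_shift_range: "l \<le> h \<Longrightarrow> c \<le> clamp_shift l h c q \<and> clamp_shift l h c q \<le> c + (h - l)"
  by (auto simp: clamp_shift_def min_def max_def)

lemma clamp_shift_comp:
  assumes "l \<le> h" "l' \<le> h'" "max c l' < min (c + (h - l)) h'"
  shows "clamp_shift l' h' c' \<circ> clamp_shift l h c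
    = clamp_shift (max c l' - c + l) (min (c + (h - l)) h' - c + l) (max c l' - l' + c')"
proof
  fix q
  define L H where "L = max c l'" and "H = min (c + (h - l)) h'"
  have LH: "c \<le> L" "l' \<le> L" "L < H" "H \<le> c + (h - l)" "H \<le> h'"
    using assms(1,3) unfolding L_def H_def by simp_all
  define t where "t = min (max q l) h"
  define X where "X = min (max q (L - c + l)) (H - c + l)"
  have "l \<le> t"
    using assms(1) by (simp add: t_def)
  have "L - c + l \<le> X"
    using LH by (simp add: X_def)
  have "min (max (clamp_shift l h c q) l') h' = min (max (clamp_shift l h c q) L) H"
    unfolding L_def H_def
    using clamp_shift_range[OF assms(1), of c q] assms(2) LH by (intro clamp_narrow) linarith+
  also have "\<dots> = min (max (t - l + c) L) H"
    by (simp add: clamp_shift_def t_def)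
  also have "\<dots> = min (max t (L - c + l)) (H - c + l) - l + c"
    using LH \<open>l \<le> t\<close> by (intro clamp_translate) simp_all
  also have "\<dots> = X - l + c"
    unfolding t_def X_def using LH by (subst clamp_clamp) simp_all
  finally have "(clamp_shift l' h' c' \<circ> clamp_shift l h c) q = X - l + c - l' + c'"
    by (simp add: clamp_shift_def)
  also have "\<dots> = X - (L - c + l) + (L - l' + c')"
    using \<open>L - c + l \<le> X\<close> LH by simp
  also have "\<dots> = clamp_shift (L - c + l) (H - c + l) (L - l' + c') q"
    by (simp only: clamp_shift_def X_def)
  finally show "(clamp_shift l' h' c' \<circ> clamp_shift l h c) q
    = clamp_shift (max c l' - c + l) (min (c + (h - l)) h' - c + l) (max c l' - l' + c') q"
    by (simp only: L_def H_def)
qed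

lemma clamp_const:
  "c \<le> y \<Longrightarrow> y \<le> e \<Longrightarrow> l \<le> h \<Longrightarrow> min e h \<le> max c l \<Longrightarrow>
    min (max y l) h = min (max c l) (h::nat)"
  by (auto simp: min_def max_def split: if_splits)

lemma clamp_shift_comp_const:
  assumes "l \<le> h" "l' \<le> h'" "min (c + (h - l)) h' \<le> max c l'"
  shows "clamp_shift l' h' c' \<circ> clamp_shift l h c = (\<lambda>_. min (max c l') h' - l' + c')"
proof
  fix q
  have "min (max (clamp_shift l h c q) l') h' = min (max c l') h'"
    using clamp_shift_range[OF assms(1), of c q] assms(2,3) by (intro clamp_const) simp_all
  then show "(clamp_shift l' h' c' \<circ> clamp_shift l h c) q = min (max c l') h' - l' + c'"
    unfolding comp_apply clamp_shift_def[of l' h' c'] by (rule arg_cong)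
qed

definition mono_nonexpanding :: "(nat \<Rightarrow> nat) \<Rightarrow> bool" where
  "mono_nonexpanding t \<longleftrightarrow> (\<forall>x y. x \<le> y \<longrightarrow> t x \<le> t y \<and> t y \<le> t x + (y - x))"

lemma mono_nonexpanding_id: "mono_nonexpanding id"
  by (simp add: mono_nonexpanding_def)

lemma mono_nonexpanding_comp:
  assumes "mono_nonexpanding s" "mono_nonexpanding t"
  shows "mono_nonexpanding (t \<circ> s)"
  unfolding mono_nonexpanding_def
proof (intro allI impI)
  fix x y :: nat assume "x \<le> y"
  then have "s x \<le> s y" "s y \<le> s x + (y - x)"
    using assms(1) by (auto simp: mono_nonexpanding_def)
  moreover from this have "t (s x) \<le> t (s y)" "t (s y) \<le> t (s x) + (s y - s x)"
    using assms(2) by (auto simp: mono_nonexpanding_def)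
  ultimately show "(t \<circ> s) x \<le> (t \<circ> s) y \<and> (t \<circ> s) y \<le> (t \<circ> s) x + (y - x)"
    by simp
qed

lemma mono_nonexpanding_diff_le:
  "mono_nonexpanding t \<Longrightarrow> x \<le> y \<Longrightarrow> t x \<le> t y \<and> t y - t x \<le> y - x"
  unfolding mono_nonexpanding_def by force

text \<open>If \<open>t\<close> does not shrink \<open>[x, y]\<close> it translates it: the conclusion is
  \<open>t z - z = t x - x\<close>, written without truncated subtraction.\<close>

lemma mono_nonexpanding_translation:
  assumes "mono_nonexpanding t" "x \<le> z" "z \<le> y" "t y - t x = y - x"
  shows "t z + x = z + t x"
proof -
  have "t x \<le> t z" "t z \<le> t x + (z - x)" "t z \<le> t y" "t y \<le> t z + (y - z)"
    using assms(1-3) unfolding mono_nonexpanding_def by auto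
  then show ?thesis
    using assms by linarith
qed

lemma mono_nonexpanding_clamp_shift: "l \<le> h \<Longrightarrow> mono_nonexpanding (clamp_shift l h c)"
  by (auto simp: mono_nonexpanding_def clamp_shift_def min_def max_def)

text \<open>The maps are total on \<open>nat\<close> but constant above \<open>n\<close>, so they are determined by
  their restriction to the chain \<open>{0..n}\<close>.\<close>

definition clamp_maps :: "nat \<Rightarrow> (nat \<Rightarrow> nat) set" where
  "clamp_maps n = {clamp_shift l h c | l h c. l \<le> h \<and> h \<le> n \<and> h - l < n \<and> c + (h - l) \<le> n}"

definition width :: "nat \<Rightarrow> (nat \<Rightarrow> nat) \<Rightarrow> nat" where
  "width n f = f n - f 0"

lemma clamp_maps_memI:
  "l \<le> h \<Longrightarrow> h \<le> n \<Longrightarrow> h - l < n \<Longrightarrow> c + (h - l) \<le> n \<Longrightarrow> clamp_shift l h c \<in> clamp_maps n"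
  unfolding clamp_maps_def by blast

lemma clamp_mapsD:
  assumes "f \<in> clamp_maps n"
  shows "mono_nonexpanding f" "f 0 \<le> f q" "f q \<le> f n" "f n \<le> n" "width n f < n"
proof -
  obtain l h c where f: "f = clamp_shift l h c" "l \<le> h" "h \<le> n" "h - l < n" "c + (h - l) \<le> n"
    using assms unfolding clamp_maps_def by blast
  then show "mono_nonexpanding f"
    by (simp add: mono_nonexpanding_clamp_shift)
  show "f 0 \<le> f q" "f q \<le> f n" "f n \<le> n" "width n f < n"
    using f by (auto simp: width_def clamp_shift_def min_def max_def)
qed

lemma clamp_shift_const: "clamp_shift l l c = (\<lambda>_. c)"
  by (simp add: fun_eq_iff clamp_shift_def)

lemma const_in_clamp_maps: "0 < n \<Longrightarrow> c \<le> n \<Longrightarrow> (\<lambda>_. c) \<in> clamp_maps n"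
  using clamp_maps_memI[of 0 0 n c] by (simp add: clamp_shift_const)

lemma clamp_maps_comp:
  assumes "0 < n" "f \<in> clamp_maps n" "g \<in> clamp_maps n"
  shows "g \<circ> f \<in> clamp_maps n"
proof -
  obtain l h c where f: "f = clamp_shift l h c" "l \<le> h" "h \<le> n" "c + (h - l) \<le> n"
    using assms(2) unfolding clamp_maps_def by blast
  obtain l' h' c' where g: "g = clamp_shift l' h' c'" "l' \<le> h'" "h' \<le> n" "h' - l' < n" "c' + (h' - l') \<le> n"
    using assms(3) unfolding clamp_maps_def by blast
  show ?thesis
  proof (cases "max c l' < min (c + (h - l)) h'")
    case True
    define L H where "L = max c l'" and "H = min (c + (h - l)) h'"
    have "c \<le> L" "l' \<le> L" "H \<le> c + (h - l)" "H \<le> h'"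
      unfolding L_def H_def by simp_all
    moreover have "L < H"
      using True unfolding L_def H_def .
    ultimately have "clamp_shift (L - c + l) (H - c + l) (L - l' + c') \<in> clamp_maps n"
      using f g by (intro clamp_maps_memI) linarith+
    then show ?thesis
      unfolding f g clamp_shift_comp[OF f(2) g(2) True] L_def H_def .
  next
    case False
    then have degenerate: "min (c + (h - l)) h' \<le> max c l'"
      by (simp only: not_less)
    show ?thesis
      unfolding f g clamp_shift_comp_const[OF f(2) g(2) degenerate]
      using assms(1) g by (intro const_in_clamp_maps) auto
  qed
qed

lemma finite_clamp_maps: "finite (clamp_maps n)"
proof (rule finite_subset)
  show "clamp_maps n \<subseteq> (\<lambda>(l, h, c). clamp_shift l h c) ` ({..n} \<times> {..n} \<times> {..n})"
  proof
    fix f assume "f \<in> clamp_maps n"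
    then obtain l h c where "f = clamp_shift l h c" "l \<le> h" "h \<le> n" "c + (h - l) \<le> n"
      unfolding clamp_maps_def by blast
    then show "f \<in> (\<lambda>(l, h, c). clamp_shift l h c) ` ({..n} \<times> {..n} \<times> {..n})"
      by (intro image_eqI[of f _ "(l, h, c)"]) auto
  qed
qed simp

lemma semigroup_clamp_maps: "0 < n \<Longrightarrow> semigroup_on (clamp_maps n) fcomp"
  unfolding semigroup_on_def by (simp add: fcomp_comp clamp_maps_comp comp_assoc)

lemma R_le_clamp_maps_iff:
  assumes "0 < n" "y \<in> clamp_maps n"
  shows "R_le (clamp_maps n) fcomp x y \<longleftrightarrow> x = y \<or> (\<exists>m\<in>clamp_maps n. x = m \<circ> y)"
  using R_le_iff[OF semigroup_clamp_maps[OF assms(1)] assms(2)] by (simp add: fcomp_comp)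

lemma width_comp_le:
  assumes "mono_nonexpanding s" "y 0 \<le> y n"
  shows "width n (s \<circ> y) \<le> width n y"
  using mono_nonexpanding_diff_le[OF assms] by (simp add: width_def)

lemma comp_width_eq_translation:
  assumes "mono_nonexpanding s" "y 0 \<le> y q" "y q \<le> y n" "width n (s \<circ> y) = width n y"
  shows "(s \<circ> y) q + y 0 = y q + (s \<circ> y) 0"
  using mono_nonexpanding_translation[OF assms(1-3)] assms(4) by (simp add: width_def)

lemma clamp_shift_recover:
  assumes "\<And>q. u 0 \<le> u q \<and> u q \<le> u n" "\<And>q. u q + v 0 = v q + u 0"
  shows "v = clamp_shift (u 0) (u n) (v 0) \<circ> u"
proof
  fix q
  show "v q = (clamp_shift (u 0) (u n) (v 0) \<circ> u) q"
    using assms[of q] by (simp add: clamp_shift_def)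
qed

lemma width_R_le_clamp_maps:
  assumes "0 < n" "x \<in> clamp_maps n" "y \<in> clamp_maps n" "R_le (clamp_maps n) fcomp x y"
  shows "width n x \<le> width n y"
  using assms clamp_mapsD[OF assms(3)] by (auto simp: R_le_clamp_maps_iff dest: clamp_mapsD(1) intro: width_comp_le)

lemma R_le_clamp_maps_of_width_eq:
  assumes "0 < n" "x \<in> clamp_maps n" "y \<in> clamp_maps n" "R_le (clamp_maps n) fcomp x y"
    and "width n x = width n y"
  shows "R_le (clamp_maps n) fcomp y x"
proof (cases "x = y")
  case False
  then obtain m where m: "m \<in> clamp_maps n" "x = m \<circ> y"
    using assms(1,3,4) by (auto simp: R_le_clamp_maps_iff)
  have "width n (m \<circ> y) = width n y"
    using assms(5) m(2) by simp
  then have "x q + y 0 = y q + x 0" for q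
    using comp_width_eq_translation[OF clamp_mapsD(1)[OF m(1)] clamp_mapsD(2,3)[OF assms(3)]] m(2)
    by simp
  then have "y = clamp_shift (x 0) (x n) (y 0) \<circ> x"
    using clamp_mapsD(2,3)[OF assms(2)] by (intro clamp_shift_recover) simp_all
  moreover have "clamp_shift (x 0) (x n) (y 0) \<in> clamp_maps n"
    using clamp_mapsD[OF assms(2)] clamp_mapsD(2-4)[OF assms(3)] assms(5)
    by (intro clamp_maps_memI) (simp_all add: width_def)
  ultimately show ?thesis
    using assms(1,2) by (auto simp: R_le_clamp_maps_iff)
qed simp

lemma R_height_clamp_maps:
  assumes "0 < n"
  shows "R_height (clamp_maps n) fcomp = n"
proof -
  have "R_height (clamp_maps n) fcomp = card {..<n}"
  proof (rule R_height_eq_card_rank[where \<mu> = "width n" and e = "\<lambda>k. clamp_shift 0 k 0"])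
    show "width n ` clamp_maps n \<subseteq> {..<n}"
      using clamp_mapsD(5) by blast
    show "clamp_shift 0 k 0 \<in> clamp_maps n \<and> width n (clamp_shift 0 k 0) = k" if "k \<in> {..<n}" for k
      using that by (auto simp: width_def clamp_shift_def intro: clamp_maps_memI)
    show "R_le (clamp_maps n) fcomp (clamp_shift 0 j 0) (clamp_shift 0 k 0)"
      if "j \<in> {..<n}" "k \<in> {..<n}" "j \<le> k" for j k
    proof -
      have "clamp_shift 0 j 0 = clamp_shift 0 j 0 \<circ> clamp_shift 0 k 0"
        using that by (auto simp: fun_eq_iff clamp_shift_def)
      moreover have "clamp_shift 0 j 0 \<in> clamp_maps n" "clamp_shift 0 k 0 \<in> clamp_maps n"
        using that by (auto intro: clamp_maps_memI)
      ultimately show ?thesis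
        using assms by (auto simp: R_le_clamp_maps_iff)
    qed
  qed (use assms width_R_le_clamp_maps R_le_clamp_maps_of_width_eq in auto)
  then show ?thesis
    by simp
qed

section \<open>The right ideal generated by the capped successor\<close>

definition capped_suc :: "nat \<Rightarrow> nat \<Rightarrow> nat" where
  "capped_suc n = clamp_shift 0 (n - 1) 1"

definition suc_ideal :: "nat \<Rightarrow> (nat \<Rightarrow> nat) set" where
  "suc_ideal n = right_ideal_gen (clamp_maps n) fcomp (capped_suc n)"

definition ideal_rank :: "nat \<Rightarrow> (nat \<Rightarrow> nat) \<Rightarrow> nat" where
  "ideal_rank n f = (if width n f = 0 then 0 else 2 * width n f + (if f n < n then 1 else 0))"

lemma capped_suc_eq: "capped_suc n q = min q (n - 1) + 1"
  by (simp add: capped_suc_def clamp_shift_def)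

lemma capped_suc_in_clamp_maps: "0 < n \<Longrightarrow> capped_suc n \<in> clamp_maps n"
  unfolding capped_suc_def by (rule clamp_maps_memI) auto

lemma mono_nonexpanding_capped_suc: "mono_nonexpanding (capped_suc n)"
  unfolding capped_suc_def by (simp add: mono_nonexpanding_clamp_shift)

lemma suc_ideal_subset: "0 < n \<Longrightarrow> suc_ideal n \<subseteq> clamp_maps n"
  unfolding suc_ideal_def by (intro right_ideal_gen_subset semigroup_clamp_maps capped_suc_in_clamp_maps)

lemma semigroup_suc_ideal: "0 < n \<Longrightarrow> semigroup_on (suc_ideal n) fcomp"
  unfolding suc_ideal_def by (intro semigroup_on_right_ideal_gen semigroup_clamp_maps capped_suc_in_clamp_maps)

lemma comp_capped_suc_in_suc_ideal: "m \<in> clamp_maps n \<Longrightarrow> m \<circ> capped_suc n \<in> suc_ideal n"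
  unfolding suc_ideal_def right_ideal_gen_def by (auto simp: fcomp_comp)

lemma suc_ideal_factor:
  "f \<in> suc_ideal n \<Longrightarrow> \<exists>t. mono_nonexpanding t \<and> f = t \<circ> capped_suc n"
  unfolding suc_ideal_def right_ideal_gen_def
  by (auto simp: fcomp_comp intro: mono_nonexpanding_id clamp_mapsD(1))

lemma R_le_suc_ideal_iff:
  assumes "0 < n" "v \<in> suc_ideal n"
  shows "R_le (suc_ideal n) fcomp u v \<longleftrightarrow> u = v \<or> (\<exists>m\<in>suc_ideal n. u = m \<circ> v)"
  using R_le_iff[OF semigroup_suc_ideal[OF assms(1)] assms(2)] by (simp add: fcomp_comp)

lemma width_capped_suc_comp:
  assumes "v \<in> clamp_maps n" "mono_nonexpanding t"
  shows "width n (t \<circ> capped_suc n \<circ> v) \<le> width n v"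
    and "v n = n \<Longrightarrow> 0 < width n v \<Longrightarrow> width n (t \<circ> capped_suc n \<circ> v) < width n v"
proof -
  have "mono_nonexpanding (t \<circ> capped_suc n)"
    by (intro mono_nonexpanding_comp mono_nonexpanding_capped_suc assms(2))
  then show "width n (t \<circ> capped_suc n \<circ> v) \<le> width n v"
    using width_comp_le clamp_mapsD(2)[OF assms(1)] by (metis comp_assoc)
  assume "v n = n" "0 < width n v"
  then have "capped_suc n (v n) = n" "capped_suc n (v 0) = v 0 + 1"
    by (auto simp: capped_suc_eq width_def)
  moreover have "t n - t (v 0 + 1) \<le> n - (v 0 + 1)"
    using mono_nonexpanding_diff_le[OF assms(2)] \<open>v n = n\<close> \<open>0 < width n v\<close>
    by (simp add: width_def)
  ultimately show "width n (t \<circ> capped_suc n \<circ> v) < width n v"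
    using \<open>v n = n\<close> \<open>0 < width n v\<close> by (simp add: width_def)
qed

lemma ideal_rank_capped_suc_comp_le:
  assumes "v \<in> clamp_maps n" "mono_nonexpanding t"
  shows "ideal_rank n (t \<circ> capped_suc n \<circ> v) \<le> ideal_rank n v"
  using width_capped_suc_comp[OF assms] clamp_mapsD(4)[OF assms(1)]
  by (auto simp: ideal_rank_def)

lemma ideal_rank_capped_suc_comp_eq_pos:
  assumes "v \<in> clamp_maps n" "mono_nonexpanding t" "0 < width n v"
    and rank: "ideal_rank n (t \<circ> capped_suc n \<circ> v) = ideal_rank n v"
  shows "width n (t \<circ> capped_suc n \<circ> v) = width n v" "v n < n" "(t \<circ> capped_suc n \<circ> v) n < n"
proof -
  let ?u = "t \<circ> capped_suc n \<circ> v"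
  have "width n ?u \<noteq> 0"
    using rank assms(3) by (auto simp: ideal_rank_def split: if_splits)
  then have "2 * width n ?u + (if ?u n < n then 1 else 0) = 2 * width n v + (if v n < n then 1 else 0)"
    using rank assms(3) by (simp add: ideal_rank_def)
  then have same_width: "width n ?u = width n v" and same_top: "?u n < n \<longleftrightarrow> v n < n"
    by (auto split: if_splits) presburger+
  then show "width n ?u = width n v"
    by blast
  show "v n < n"
    using width_capped_suc_comp(2)[OF assms(1,2)] clamp_mapsD(4)[OF assms(1)] assms(3) same_width
    by fastforce
  with same_top show "?u n < n"
    by blast
qed

lemma ideal_rank_capped_suc_comp_eq:
  assumes "0 < n" "u \<in> clamp_maps n" "v \<in> clamp_maps n" "mono_nonexpanding t"
    and u: "u = t \<circ> capped_suc n \<circ> v" and rank: "ideal_rank n u = ideal_rank n v"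
  shows "\<exists>m\<in>suc_ideal n. v = m \<circ> u"
proof (cases "width n v = 0")
  case True
  have v_const: "v = (\<lambda>_. v 0)"
    using clamp_mapsD(2,3)[OF assms(3)] True by (auto simp: width_def fun_eq_iff intro: antisym order_trans)
  have "(\<lambda>_. v 0) \<in> clamp_maps n"
    using assms(1) clamp_mapsD(3)[OF assms(3), of 0] clamp_mapsD(4)[OF assms(3)]
    by (intro const_in_clamp_maps) auto
  then have "(\<lambda>_. v 0) \<circ> capped_suc n \<in> suc_ideal n"
    by (rule comp_capped_suc_in_suc_ideal)
  moreover have "v = ((\<lambda>_. v 0) \<circ> capped_suc n) \<circ> u"
    by (subst v_const) (simp add: comp_def)
  ultimately show ?thesis
    by blast
next
  case False
  then have same_width: "width n u = width n v" and "u n < n"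
    using ideal_rank_capped_suc_comp_eq_pos[OF assms(3,4)] rank u by auto
  have "mono_nonexpanding (t \<circ> capped_suc n)"
    by (intro mono_nonexpanding_comp mono_nonexpanding_capped_suc assms(4))
  then have "u q + v 0 = v q + u 0" for q
    using comp_width_eq_translation clamp_mapsD(2,3)[OF assms(3)] same_width u by blast
  moreover have "(capped_suc n \<circ> u) q = u q + 1" for q
    using clamp_mapsD(3)[OF assms(2), of q] \<open>u n < n\<close> by (simp add: capped_suc_eq)
  ultimately have "v = clamp_shift (u 0 + 1) (u n + 1) (v 0) \<circ> (capped_suc n \<circ> u)"
    using clamp_shift_recover[of "capped_suc n \<circ> u" n v] clamp_mapsD(2,3)[OF assms(2)] by simp
  moreover have "clamp_shift (u 0 + 1) (u n + 1) (v 0) \<in> clamp_maps n"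
    using clamp_mapsD(2,5)[OF assms(2)] clamp_mapsD(2,4)[OF assms(3)] \<open>u n < n\<close> same_width
    by (intro clamp_maps_memI) (auto simp: width_def)
  ultimately show ?thesis
    using comp_capped_suc_in_suc_ideal by (metis comp_assoc)
qed

lemma suc_ideal_R_le_cases:
  assumes "0 < n" "u \<in> suc_ideal n" "v \<in> suc_ideal n" "R_le (suc_ideal n) fcomp u v" "u \<noteq> v"
  obtains t where "mono_nonexpanding t" "u = t \<circ> capped_suc n \<circ> v"
  using assms suc_ideal_factor by (auto simp: R_le_suc_ideal_iff)

lemma ideal_rank_R_le_mono:
  assumes "0 < n" "u \<in> suc_ideal n" "v \<in> suc_ideal n" "R_le (suc_ideal n) fcomp u v"
  shows "ideal_rank n u \<le> ideal_rank n v"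
proof (cases "u = v")
  case False
  then obtain t where "mono_nonexpanding t" "u = t \<circ> capped_suc n \<circ> v"
    using suc_ideal_R_le_cases assms by blast
  then show ?thesis
    using ideal_rank_capped_suc_comp_le suc_ideal_subset assms(1,3) by blast
qed simp

lemma R_le_suc_ideal_of_rank_eq:
  assumes "0 < n" "u \<in> suc_ideal n" "v \<in> suc_ideal n" "R_le (suc_ideal n) fcomp u v"
    and "ideal_rank n u = ideal_rank n v"
  shows "R_le (suc_ideal n) fcomp v u"
proof (cases "u = v")
  case False
  then obtain t where "mono_nonexpanding t" "u = t \<circ> capped_suc n \<circ> v"
    using suc_ideal_R_le_cases assms by blast
  then obtain m where "m \<in> suc_ideal n" "v = m \<circ> u"
    using ideal_rank_capped_suc_comp_eq suc_ideal_subset assms by (metis subsetD)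
  then show ?thesis
    using assms(1,2) by (auto simp: R_le_suc_ideal_iff)
qed simp

lemma clamp_shift_in_suc_ideal:
  assumes "j < n" "c + j \<le> n"
  shows "clamp_shift 0 j c \<in> suc_ideal n"
proof -
  have "clamp_shift 0 j c = clamp_shift 1 (j + 1) c \<circ> capped_suc n"
    using assms by (auto simp: fun_eq_iff clamp_shift_def capped_suc_eq min_def max_def)
  moreover have "clamp_shift 1 (j + 1) c \<in> clamp_maps n"
    using assms by (intro clamp_maps_memI) auto
  ultimately show ?thesis
    by (simp add: comp_capped_suc_in_suc_ideal)
qed

lemma R_le_suc_ideal_clamp_shift:
  assumes "j \<le> k" "k < n" "j + d < n" "c + j \<le> n" "k + d \<le> n"
  shows "R_le (suc_ideal n) fcomp (clamp_shift 0 j c) (clamp_shift 0 k d)"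
proof -
  have "clamp_shift 0 j c = (clamp_shift (d + 1) (d + 1 + j) c \<circ> capped_suc n) \<circ> clamp_shift 0 k d"
    using assms by (auto simp: fun_eq_iff clamp_shift_def capped_suc_eq min_def max_def)
  moreover have "clamp_shift (d + 1) (d + 1 + j) c \<circ> capped_suc n \<in> suc_ideal n"
    using assms by (intro comp_capped_suc_in_suc_ideal clamp_maps_memI) auto
  moreover have "clamp_shift 0 k d \<in> suc_ideal n"
    using assms by (intro clamp_shift_in_suc_ideal) auto
  ultimately show ?thesis
    using assms by (auto simp: R_le_suc_ideal_iff)
qed

lemma R_height_suc_ideal:
  assumes "0 < n"
  shows "R_height (suc_ideal n) fcomp = 2 * n - 1"
proof -
  define V where "V = insert 0 {2..<2 * n}"
  \<comment> \<open>\<open>e (2 * w + 1)\<close> has range \<open>[0, w]\<close>, below \<open>n\<close>; \<open>e (2 * w)\<close> has range \<open>[n - w, n]\<close>.\<close>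
  define e where "e i = clamp_shift 0 (i div 2) (if even i \<and> i \<noteq> 0 then n - i div 2 else 0)" for i
  have "R_height (suc_ideal n) fcomp = card V"
  proof (rule R_height_eq_card_rank[where \<mu> = "ideal_rank n" and e = e])
    show "finite V"
      by (simp add: V_def)
    show "ideal_rank n ` suc_ideal n \<subseteq> V"
      using clamp_mapsD(5) suc_ideal_subset[OF assms] by (fastforce simp: ideal_rank_def V_def)
    show "e i \<in> suc_ideal n \<and> ideal_rank n (e i) = i" if "i \<in> V" for i
    proof
      show "e i \<in> suc_ideal n"
        using that assms unfolding e_def V_def by (intro clamp_shift_in_suc_ideal) auto
      show "ideal_rank n (e i) = i"
        using that by (auto simp: e_def V_def ideal_rank_def width_def clamp_shift_def elim: evenE oddE)
    qed
    show "R_le (suc_ideal n) fcomp (e i) (e i')" if "i \<in> V" "i' \<in> V" "i \<le> i'" for i i'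
    proof (cases "i = i'")
      case False
      then have "i div 2 < i' div 2" if "even i'" "i' \<noteq> 0"
        using \<open>i \<le> i'\<close> that by (auto elim!: evenE)
      then show ?thesis
        using assms \<open>i \<in> V\<close> \<open>i' \<in> V\<close> \<open>i \<le> i'\<close> unfolding e_def V_def
        by (intro R_le_suc_ideal_clamp_shift) (auto simp: div_le_mono)
    qed simp
  qed (use assms ideal_rank_R_le_mono R_le_suc_ideal_of_rank_eq in auto)
  moreover have "card V = 2 * n - 1"
    using assms by (simp add: V_def)
  ultimately show ?thesis
    by simp
qed

theorem corollary4p6:
  fixes n :: nat
  assumes "n \<ge> 1"
  shows "\<exists>(S :: nat set) (f :: nat \<Rightarrow> nat \<Rightarrow> nat) a.
           finite S \<and> semigroup_on S f \<and> a \<in> S \<and>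
           R_height S f = enat n \<and>
           R_height (right_ideal_gen S f a) f = enat (2 * n - 1)"
proof -
  have "0 < n"
    using assms by simp
  then show ?thesis
    using finite_semigroup_nat_copy[OF finite_clamp_maps semigroup_clamp_maps capped_suc_in_clamp_maps]
      R_height_clamp_maps R_height_suc_ideal
    unfolding suc_ideal_def by simp
qed

end
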